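(* (1) The relation $\sim$ is an equivalence relation on the set of positive ABMN solutions. (2) Each equivalence class contains exactly one standard solution and exactly one default solution.
   Context: ABMN system on $\mathbb{Z}$: real variables $a_i,b_i\ge0$, $m_i,n_i$ with, for all $i$, $(a_i+b_i)(m_i+a_i)=a_im_{i+1}+b_im_{i-1}$, $(a_i+b_i)(n_i+b_i)=a_in_{i+1}+b_in_{i-1}$, $(a_i+b_i)^2=b_i(m_{i+1}-m_{i-1})$, $(a_i+b_i)^2=a_i(n_{i-1}-n_{i+1})$; positive if all $a_i,b_i>0$; $m_{\pm\infty},n_{\pm\infty}$ denote the (real) limits of $m_i,n_i$ as $i\to\pm\infty$. For a quadruple of sequences $(a,b,m,n)$, $u>0$ and $v_1,v_2\in\mathbb{R}$, set $\tau_u(a,b,m,n)=(ua,ub,um,un)$ and $\chi_{v_1,v_2}(a,b,m,n)=(a,b,m+v_1,n+v_2)$. Two solutions are related by $\sim$ if one is the image of the other under $\tau_u\circ\chi_{v_1,v_2}$ for some such $u,v_1,v_2$. A positive solution is standard if $m_{-\infty}=0$, $n_\infty=0$, $m_\infty=1$; default if $m_{-\infty}=0$, $n_\infty=0$, $m_0-m_{-1}=1$. *)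

theory Defs
  imports "HOL-Analysis.Analysis"
begin

type_synonym seq = "int \<Rightarrow> real"
type_synonym quad = "seq \<times> seq \<times> seq \<times> seq"

definition ABMN_solution :: "quad \<Rightarrow> bool" where
  "ABMN_solution q = (case q of (a, b, m, n) \<Rightarrow>
     (\<forall>i. a i \<ge> 0 \<and> b i \<ge> 0 \<and>
       (a i + b i) * (m i + a i) = a i * m (i + 1) + b i * m (i - 1) \<and>
       (a i + b i) * (n i + b i) = a i * n (i + 1) + b i * n (i - 1) \<and>
       (a i + b i)^2 = b i * (m (i + 1) - m (i - 1)) \<and>
       (a i + b i)^2 = a i * (n (i - 1) - n (i + 1))))"

definition positive_solution :: "quad \<Rightarrow> bool" where
  "positive_solution q = (ABMN_solution q \<and>
     (case q of (a, b, m, n) \<Rightarrow> (\<forall>i. a i > 0 \<and> b i > 0)))"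

definition tau :: "real \<Rightarrow> quad \<Rightarrow> quad" where
  "tau u q = (case q of (a, b, m, n) \<Rightarrow>
     ((\<lambda>i. u * a i), (\<lambda>i. u * b i), (\<lambda>i. u * m i), (\<lambda>i. u * n i)))"

definition chi :: "real \<Rightarrow> real \<Rightarrow> quad \<Rightarrow> quad" where
  "chi v1 v2 q = (case q of (a, b, m, n) \<Rightarrow>
     (a, b, (\<lambda>i. m i + v1), (\<lambda>i. n i + v2)))"

definition abmn_sim :: "quad \<Rightarrow> quad \<Rightarrow> bool" where
  "abmn_sim x y = (\<exists>u v1 v2. u > 0 \<and>
      (y = tau u (chi v1 v2 x) \<or> x = tau u (chi v1 v2 y)))"

definition standard_solution :: "quad \<Rightarrow> bool" where
  "standard_solution q = (positive_solution q \<and>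
     (case q of (a, b, m, n) \<Rightarrow>
        (m \<longlongrightarrow> 0) at_bot \<and> (n \<longlongrightarrow> 0) at_top \<and> (m \<longlongrightarrow> 1) at_top))"

definition default_solution :: "quad \<Rightarrow> bool" where
  "default_solution q = (positive_solution q \<and>
     (case q of (a, b, m, n) \<Rightarrow>
        (m \<longlongrightarrow> 0) at_bot \<and> (n \<longlongrightarrow> 0) at_top \<and> m 0 - m (-1) = 1))"

end

theory Submission
  imports Defs
begin

(* The relation ~ is the orbit relation of the maps abmn_affine \<alpha> \<beta> \<gamma> with \<alpha> > 0, which scale
   all four sequences by \<alpha> and then shift m by \<beta> and n by \<gamma>; they form a group preserving positive
   solutions. Normalizing inside an orbit needs the limits of m and n. Eliminating m (i + 1) and
   n (i - 1) from the system gives m (i + 1) - m i = 2 a i + b i and n (i - 1) - n i = a i + 2 b i,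
   and then the ratio r = b / a satisfies r (i + 1) \<le> r i ^ 2 / (2 + r i), so a + 2 b decays
   faster than any geometric sequence as i \<rightarrow> \<infinity> and m, n converge there. The reflection
   (a, b, m, n) i \<mapsto> (b, a, n, m) (- i) maps solutions to solutions and carries this over to
   i \<rightarrow> - \<infinity>. Each of the two normalizations then determines \<alpha>, \<beta>, \<gamma> uniquely. *)

definition abmn_affine :: "real \<Rightarrow> real \<Rightarrow> real \<Rightarrow> quad \<Rightarrow> quad" where
  "abmn_affine \<alpha> \<beta> \<gamma> q = (case q of (a, b, m, n) \<Rightarrow>
     (\<lambda>i. \<alpha> * a i, \<lambda>i. \<alpha> * b i, \<lambda>i. \<alpha> * m i + \<beta>, \<lambda>i. \<alpha> * n i + \<gamma>))"

lemma abmn_affine_simps [simp]: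
  "abmn_affine \<alpha> \<beta> \<gamma> (a, b, m, n) =
     (\<lambda>i. \<alpha> * a i, \<lambda>i. \<alpha> * b i, \<lambda>i. \<alpha> * m i + \<beta>, \<lambda>i. \<alpha> * n i + \<gamma>)"
  by (simp add: abmn_affine_def)

lemma abmn_affine_id: "abmn_affine 1 0 0 q = q"
  by (cases q) simp

lemma abmn_affine_comp:
  "abmn_affine \<alpha>' \<beta>' \<gamma>' (abmn_affine \<alpha> \<beta> \<gamma> q) =
     abmn_affine (\<alpha>' * \<alpha>) (\<alpha>' * \<beta> + \<beta>') (\<alpha>' * \<gamma> + \<gamma>') q"
  by (cases q) (simp add: fun_eq_iff algebra_simps)

lemma abmn_affine_inverse:
  "\<alpha> \<noteq> 0 \<Longrightarrow> abmn_affine (1 / \<alpha>) (- \<beta> / \<alpha>) (- \<gamma> / \<alpha>) (abmn_affine \<alpha> \<beta> \<gamma> q) = q"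
  by (cases q) (simp add: fun_eq_iff field_simps)

lemma tau_chi_eq_abmn_affine: "tau u (chi v1 v2 q) = abmn_affine u (u * v1) (u * v2) q"
  by (cases q) (simp add: tau_def chi_def fun_eq_iff algebra_simps)

lemma abmn_sim_iff_affine:
  "abmn_sim x y \<longleftrightarrow> (\<exists>\<alpha> \<beta> \<gamma>. \<alpha> > 0 \<and> y = abmn_affine \<alpha> \<beta> \<gamma> x)"
proof
  assume "abmn_sim x y"
  then obtain u v1 v2 where u: "u > 0"
    and "y = abmn_affine u (u * v1) (u * v2) x \<or> x = abmn_affine u (u * v1) (u * v2) y"
    unfolding abmn_sim_def tau_chi_eq_abmn_affine by blast
  then consider "y = abmn_affine u (u * v1) (u * v2) x" | "x = abmn_affine u (u * v1) (u * v2) y"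
    by blast
  then show "\<exists>\<alpha> \<beta> \<gamma>. \<alpha> > 0 \<and> y = abmn_affine \<alpha> \<beta> \<gamma> x"
  proof cases
    case 1
    with u show ?thesis by blast
  next
    case 2
    have "abmn_affine (1 / u) (- (u * v1) / u) (- (u * v2) / u) x = y"
      unfolding 2 using u by (intro abmn_affine_inverse) simp
    then have "y = abmn_affine (1 / u) (- v1) (- v2) x"
      using u by simp
    moreover have "1 / u > 0" using u by simp
    ultimately show ?thesis by blast
  qed
next
  assume "\<exists>\<alpha> \<beta> \<gamma>. \<alpha> > 0 \<and> y = abmn_affine \<alpha> \<beta> \<gamma> x"
  then obtain \<alpha> \<beta> \<gamma> where "\<alpha> > 0" "y = abmn_affine \<alpha> \<beta> \<gamma> x" by blast
  then have "y = tau \<alpha> (chi (\<beta> / \<alpha>) (\<gamma> / \<alpha>) x)" by (simp add: tau_chi_eq_abmn_affine)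
  with \<open>\<alpha> > 0\<close> show "abmn_sim x y" unfolding abmn_sim_def by blast
qed

lemma abmn_sim_refl: "abmn_sim x x"
  using abmn_affine_id abmn_sim_iff_affine zero_less_one by metis

lemma abmn_sim_sym: "abmn_sim x y \<Longrightarrow> abmn_sim y x"
  unfolding abmn_sim_def by blast

lemma abmn_sim_trans:
  assumes "abmn_sim x y" "abmn_sim y z"
  shows "abmn_sim x z"
proof -
  obtain \<alpha> \<beta> \<gamma> where "\<alpha> > 0" "y = abmn_affine \<alpha> \<beta> \<gamma> x"
    using assms(1) abmn_sim_iff_affine by blast
  moreover obtain \<alpha>' \<beta>' \<gamma>' where "\<alpha>' > 0" "z = abmn_affine \<alpha>' \<beta>' \<gamma>' y"
    using assms(2) abmn_sim_iff_affine by blast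
  ultimately have "\<alpha>' * \<alpha> > 0"
    and "z = abmn_affine (\<alpha>' * \<alpha>) (\<alpha>' * \<beta> + \<beta>') (\<alpha>' * \<gamma> + \<gamma>') x"
    by (simp_all add: abmn_affine_comp)
  then show ?thesis unfolding abmn_sim_iff_affine by blast
qed

lemma positive_solution_iff:
  "positive_solution (a, b, m, n) \<longleftrightarrow> (\<forall>i. a i > 0 \<and> b i > 0 \<and>
       (a i + b i) * (m i + a i) = a i * m (i + 1) + b i * m (i - 1) \<and>
       (a i + b i) * (n i + b i) = a i * n (i + 1) + b i * n (i - 1) \<and>
       (a i + b i)\<^sup>2 = b i * (m (i + 1) - m (i - 1)) \<and>
       (a i + b i)\<^sup>2 = a i * (n (i - 1) - n (i + 1)))"
  unfolding positive_solution_def ABMN_solution_def by (auto simp: less_imp_le)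

lemma recurrence_affine:
  fixes a b c m m\<^sub>0 m\<^sub>1 \<alpha> \<beta> :: real
  assumes "(a + b) * (m + c) = a * m\<^sub>1 + b * m\<^sub>0"
  shows "(\<alpha> * a + \<alpha> * b) * (\<alpha> * m + \<beta> + \<alpha> * c) =
    \<alpha> * a * (\<alpha> * m\<^sub>1 + \<beta>) + \<alpha> * b * (\<alpha> * m\<^sub>0 + \<beta>)"
  using arg_cong[OF assms, of "\<lambda>t. \<alpha>\<^sup>2 * t"] by (simp add: algebra_simps power2_eq_square)

lemma increment_scaled:
  fixes a b c m\<^sub>0 m\<^sub>1 \<alpha> :: real
  assumes "(a + b)\<^sup>2 = c * (m\<^sub>1 - m\<^sub>0)"
  shows "(\<alpha> * a + \<alpha> * b)\<^sup>2 = \<alpha> * c * (\<alpha> * m\<^sub>1 - \<alpha> * m\<^sub>0)"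
  using arg_cong[OF assms, of "\<lambda>t. \<alpha>\<^sup>2 * t"] by (simp add: algebra_simps power2_eq_square)

lemma positive_solution_abmn_affine:
  assumes "positive_solution q" "\<alpha> > 0"
  shows "positive_solution (abmn_affine \<alpha> \<beta> \<gamma> q)"
proof -
  obtain a b m n where q: "q = (a, b, m, n)" by (cases q)
  show ?thesis
    using assms unfolding q abmn_affine_simps positive_solution_iff
    by (auto intro!: recurrence_affine increment_scaled)
qed

lemma positive_solution_reflect:
  assumes "positive_solution (a, b, m, n)"
  shows "positive_solution (\<lambda>i. b (- i), \<lambda>i. a (- i), \<lambda>i. n (- i), \<lambda>i. m (- i))"
  unfolding positive_solution_iff
proof
  fix i :: int
  have reindex: "- (i - 1) = - i + 1" "- (i + 1) = - i - 1" by simp_all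
  show "b (- i) > 0 \<and> a (- i) > 0 \<and>
       (b (- i) + a (- i)) * (n (- i) + b (- i)) = b (- i) * n (- (i + 1)) + a (- i) * n (- (i - 1)) \<and>
       (b (- i) + a (- i)) * (m (- i) + a (- i)) = b (- i) * m (- (i + 1)) + a (- i) * m (- (i - 1)) \<and>
       (b (- i) + a (- i))\<^sup>2 = a (- i) * (n (- (i + 1)) - n (- (i - 1))) \<and>
       (b (- i) + a (- i))\<^sup>2 = b (- i) * (m (- (i - 1)) - m (- (i + 1)))"
    unfolding reindex using assms[unfolded positive_solution_iff, rule_format, of "- i"]
    by (simp add: add.commute)
qed

lemma quadratic_contraction_LIMSEQ_zero:
  fixes r :: "nat \<Rightarrow> real"
  assumes pos: "\<And>k. r k > 0" and contract: "\<And>k. r (Suc k) \<le> (r k)\<^sup>2 / (2 + r k)"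
  shows "r \<longlonglongrightarrow> 0"
proof -
  define q where "q = r 0 / (2 + r 0)"
  have q: "0 \<le> q" "q < 1" unfolding q_def using pos[of 0] by simp_all
  have geometric: "r k \<le> r 0 * q ^ k" for k
  proof (induction k)
    case (Suc k)
    have "r 0 * q ^ k \<le> r 0 * 1"
      using q pos[of 0] by (intro mult_left_mono power_le_one) auto
    with Suc have "r k \<le> r 0" by simp
    then have "r k * (2 + r 0) \<le> r 0 * (2 + r k)" by (simp add: algebra_simps)
    then have "r k / (2 + r k) \<le> q"
      unfolding q_def using pos[of k] \<open>r k \<le> r 0\<close> by (simp add: field_simps)
    then have "r k * (r k / (2 + r k)) \<le> r k * q"
      using pos[of k] by (intro mult_left_mono) auto
    then have "(r k)\<^sup>2 / (2 + r k) \<le> r k * q" by (simp add: power2_eq_square)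
    also have "\<dots> \<le> r 0 * q ^ k * q" using Suc q by (intro mult_right_mono) auto
    finally show ?case using contract[of k] by (simp add: algebra_simps)
  qed simp
  have "(\<lambda>k. r 0 * q ^ k) \<longlonglongrightarrow> 0"
    using q by (intro tendsto_mult_right_zero LIMSEQ_power_zero) simp
  moreover have "\<forall>\<^sub>F k in sequentially. 0 \<le> r k" using pos by (simp add: less_imp_le)
  moreover have "\<forall>\<^sub>F k in sequentially. r k \<le> r 0 * q ^ k" using geometric by simp
  ultimately show ?thesis by (intro tendsto_sandwich[of "\<lambda>_. 0" r]) auto
qed

lemma summable_ratio_test_tendsto_zero:
  fixes s c :: "nat \<Rightarrow> real"
  assumes nonneg: "\<And>k. s k \<ge> 0" and ratio: "\<And>k. s (Suc k) \<le> s k * c k"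
    and "c \<longlonglongrightarrow> 0"
  shows "summable s"
proof -
  obtain N where N: "\<And>k. k \<ge> N \<Longrightarrow> c k < 1 / 2"
    using order_tendstoD(2)[OF \<open>c \<longlonglongrightarrow> 0\<close>, of "1 / 2"] by (auto simp: eventually_sequentially)
  show ?thesis
  proof (rule summable_ratio_test[of "1 / 2" N])
    fix k assume "k \<ge> N"
    then have "s k * c k \<le> s k * (1 / 2)"
      using N nonneg by (intro mult_left_mono) (auto intro: less_imp_le)
    then show "norm (s (Suc k)) \<le> 1 / 2 * norm (s k)"
      using ratio[of k] nonneg[of k] nonneg[of "Suc k"] by simp
  qed simp
qed

lemma tendsto_at_top_of_summable_increments:
  fixes g :: "int \<Rightarrow> real"
  assumes "summable (\<lambda>k. g (int k + 1) - g (int k))"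
  shows "(g \<longlongrightarrow> g 0 + (\<Sum>k. g (int k + 1) - g (int k))) at_top"
proof (rule filterlim_int_of_nat_at_topD)
  have "(\<lambda>k. g 0 + (\<Sum>j<k. g (int j + 1) - g (int j)))
      \<longlonglongrightarrow> g 0 + (\<Sum>k. g (int k + 1) - g (int k))"
    by (intro tendsto_add tendsto_const summable_LIMSEQ assms)
  moreover have "g 0 + (\<Sum>j<k. g (int j + 1) - g (int j)) = g (int k)" for k
    using sum_lessThan_telescope[of "\<lambda>j. g (int j)" k] by (simp add: add.commute)
  ultimately show "(\<lambda>k. g (int k)) \<longlonglongrightarrow> g 0 + (\<Sum>k. g (int k + 1) - g (int k))"
    by simp
qed

lemma affine_limit_unique:
  fixes f :: "'a \<Rightarrow> real"
  assumes "F \<noteq> bot" "(f \<longlongrightarrow> L) F" "((\<lambda>x. \<alpha> * f x + \<beta>) \<longlongrightarrow> c) F"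
  shows "\<alpha> * L + \<beta> = c"
  using assms by (intro tendsto_unique[OF assms(1) _ assms(3)] tendsto_intros)

(* (x, y) stands for (a (i + 1), b (i + 1)); the hypotheses are the two-step relations of a solution. *)
lemma step_ratio_bounds:
  fixes a b x y :: real
  assumes pos: "a > 0" "b > 0" "x > 0" "y > 0"
    and next_a: "x\<^sup>2 = (2 * a + b) * y" and next_b: "a * (x + 2 * y) = b\<^sup>2"
  shows "y / x \<le> (b / a)\<^sup>2 / (2 + b / a)" "x + 2 * y \<le> (a + 2 * b) * (b / a) / 2"
proof -
  have "x \<le> x + 2 * y" using pos by simp
  also have "\<dots> = b\<^sup>2 / a" using next_b pos by (simp add: field_simps)
  finally have "x / (2 * a + b) \<le> (b\<^sup>2 / a) / (2 * a + b)"
    using pos by (intro divide_right_mono) auto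
  moreover have "y / x = x / (2 * a + b)" using next_a pos by (simp add: field_simps power2_eq_square)
  moreover have "(b\<^sup>2 / a) / (2 * a + b) = (b / a)\<^sup>2 / (2 + b / a)"
    using pos by (simp add: field_simps power2_eq_square)
  ultimately show "y / x \<le> (b / a)\<^sup>2 / (2 + b / a)" by simp
  have "x + 2 * y = b * (b / a)" using next_b pos by (simp add: field_simps power2_eq_square)
  also have "\<dots> \<le> (a + 2 * b) / 2 * (b / a)" using pos by (intro mult_right_mono) auto
  finally show "x + 2 * y \<le> (a + 2 * b) * (b / a) / 2" by simp
qed

locale positive_abmn =
  fixes a b m n :: seq
  assumes positive: "positive_solution (a, b, m, n)"
begin

lemma a_pos: "a i > 0" and b_pos: "b i > 0"
  using positive unfolding positive_solution_iff by auto

lemma recurrences: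
  shows m_recurrence: "(a i + b i) * (m i + a i) = a i * m (i + 1) + b i * m (i - 1)"
    and n_recurrence: "(a i + b i) * (n i + b i) = a i * n (i + 1) + b i * n (i - 1)"
    and m_increment: "(a i + b i)\<^sup>2 = b i * (m (i + 1) - m (i - 1))"
    and n_increment: "(a i + b i)\<^sup>2 = a i * (n (i - 1) - n (i + 1))"
  using positive unfolding positive_solution_iff by blast+

lemma m_step: "m (i + 1) - m i = 2 * a i + b i"
proof -
  have "(a i + b i) * (m (i + 1) - m i - (2 * a i + b i)) =
      (a i * m (i + 1) + b i * m (i - 1) - (a i + b i) * (m i + a i))
      + (b i * (m (i + 1) - m (i - 1)) - (a i + b i)\<^sup>2)"
    by (simp add: algebra_simps power2_eq_square)
  also have "\<dots> = 0" using m_recurrence m_increment by simp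
  finally show ?thesis using a_pos[of i] b_pos[of i] by simp
qed

lemma n_step: "n (i - 1) - n i = a i + 2 * b i"
proof -
  have "(a i + b i) * (n (i - 1) - n i - (a i + 2 * b i)) =
      (a i * n (i + 1) + b i * n (i - 1) - (a i + b i) * (n i + b i))
      + (a i * (n (i - 1) - n (i + 1)) - (a i + b i)\<^sup>2)"
    by (simp add: algebra_simps power2_eq_square)
  also have "\<dots> = 0" using n_recurrence n_increment by simp
  finally show ?thesis using a_pos[of i] b_pos[of i] by simp
qed

lemma a_succ_sq: "(a (i + 1))\<^sup>2 = (2 * a i + b i) * b (i + 1)"
proof -
  have "m (i + 1 + 1) - m (i + 1 - 1) = (2 * a (i + 1) + b (i + 1)) + (2 * a i + b i)"
    using m_step[of "i + 1"] m_step[of i] by simp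
  then have "(a (i + 1) + b (i + 1))\<^sup>2 =
      b (i + 1) * ((2 * a (i + 1) + b (i + 1)) + (2 * a i + b i))"
    using m_increment[of "i + 1"] by simp
  then show ?thesis by (simp add: algebra_simps power2_eq_square)
qed

lemma b_sq: "a i * (a (i + 1) + 2 * b (i + 1)) = (b i)\<^sup>2"
proof -
  have "n (i - 1) - n (i + 1) = (a i + 2 * b i) + (a (i + 1) + 2 * b (i + 1))"
    using n_step[of i] n_step[of "i + 1"] by simp
  then have "(a i + b i)\<^sup>2 = a i * ((a i + 2 * b i) + (a (i + 1) + 2 * b (i + 1)))"
    using n_increment[of i] by simp
  then show ?thesis by (simp add: algebra_simps power2_eq_square)
qed

lemma summable_forward: "summable (\<lambda>k. a (int k) + 2 * b (int k))"
proof -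
  define r where "r k = b (int k) / a (int k)" for k
  have succ: "int (Suc k) = int k + 1" for k by simp
  have bounds: "r (Suc k) \<le> (r k)\<^sup>2 / (2 + r k)"
    "a (int (Suc k)) + 2 * b (int (Suc k)) \<le> (a (int k) + 2 * b (int k)) * (r k / 2)" for k
    using step_ratio_bounds[OF a_pos b_pos a_pos b_pos a_succ_sq b_sq, of "int k"]
    unfolding r_def succ by simp_all
  have "r \<longlonglongrightarrow> 0"
    using bounds(1) a_pos b_pos by (intro quadratic_contraction_LIMSEQ_zero) (simp_all add: r_def)
  then have "(\<lambda>k. r k / 2) \<longlonglongrightarrow> 0"
    using tendsto_divide_zero by blast
  then show ?thesis
  proof (rule summable_ratio_test_tendsto_zero[rotated 2])
    show "0 \<le> a (int k) + 2 * b (int k)" for k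
      using a_pos[of "int k"] b_pos[of "int k"] by simp
  qed (rule bounds(2))
qed

lemma limits_at_top:
  obtains L N where "(m \<longlongrightarrow> L) at_top" "m 0 \<le> L" "(n \<longlongrightarrow> N) at_top" "N < n 0"
proof
  define s where "s k = a (int k) + 2 * b (int k)" for k
  have s: "summable s" "s k > 0" for k
    using summable_forward a_pos[of "int k"] b_pos[of "int k"] by (simp_all add: s_def[abs_def])
  have m_increments: "m (int k + 1) - m (int k) = 2 * a (int k) + b (int k)" for k
    by (rule m_step)
  have n_increments: "n (int k + 1) - n (int k) = - s (Suc k)" for k
    using n_step[of "int k + 1"] by (simp add: s_def add.commute)
  have "summable (\<lambda>k. 2 * a (int k) + b (int k))"
  proof (rule summable_comparison_test')
    show "summable (\<lambda>k. 2 * s k)" using s by simp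
    show "norm (2 * a (int k) + b (int k)) \<le> 2 * s k" for k
      using a_pos[of "int k"] b_pos[of "int k"] by (simp add: s_def)
  qed
  then show "(m \<longlongrightarrow> m 0 + (\<Sum>k. 2 * a (int k) + b (int k))) at_top"
    and "m 0 \<le> m 0 + (\<Sum>k. 2 * a (int k) + b (int k))"
    using tendsto_at_top_of_summable_increments[of m, unfolded m_increments]
      suminf_nonneg[of "\<lambda>k. 2 * a (int k) + b (int k)"] a_pos b_pos
    by (simp_all add: less_imp_le)
  have s_Suc: "summable (\<lambda>k. s (Suc k))" using s by (simp add: summable_Suc_iff)
  then show "(n \<longlongrightarrow> n 0 - (\<Sum>k. s (Suc k))) at_top" and "n 0 - (\<Sum>k. s (Suc k)) < n 0"
    using tendsto_at_top_of_summable_increments[of n, unfolded n_increments]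
      summable_minus[OF s_Suc] suminf_pos[OF s_Suc] s
    by (simp_all add: suminf_minus)
qed

lemma limits:
  obtains L\<^sub>0 L\<^sub>1 N
  where "(m \<longlongrightarrow> L\<^sub>0) at_bot" "(m \<longlongrightarrow> L\<^sub>1) at_top" "(n \<longlongrightarrow> N) at_top" "L\<^sub>0 < L\<^sub>1"
proof -
  obtain L\<^sub>1 N where "(m \<longlongrightarrow> L\<^sub>1) at_top" "m 0 \<le> L\<^sub>1" "(n \<longlongrightarrow> N) at_top" "N < n 0"
    by (rule limits_at_top)
  interpret reflected: positive_abmn "\<lambda>i. b (- i)" "\<lambda>i. a (- i)" "\<lambda>i. n (- i)" "\<lambda>i. m (- i)"
    using positive by unfold_locales (rule positive_solution_reflect)
  \<comment> \<open>the reflected solution has \<open>\<lambda>i. m (- i)\<close> as its n-sequence\<close>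
  obtain L\<^sub>0 where "((\<lambda>i. m (- i)) \<longlongrightarrow> L\<^sub>0) at_top" "L\<^sub>0 < m 0"
    using reflected.limits_at_top by (metis minus_zero)
  then have "(m \<longlongrightarrow> L\<^sub>0) at_bot" "L\<^sub>0 < L\<^sub>1"
    using \<open>m 0 \<le> L\<^sub>1\<close> by (simp_all add: filterlim_def at_bot_mirror filtermap_filtermap)
  with that \<open>(m \<longlongrightarrow> L\<^sub>1) at_top\<close> \<open>(n \<longlongrightarrow> N) at_top\<close> show ?thesis by blast
qed

lemma exists_standard:
  "\<exists>\<alpha> \<beta> \<gamma>. \<alpha> > 0 \<and> standard_solution (abmn_affine \<alpha> \<beta> \<gamma> (a, b, m, n))"
proof -
  obtain L\<^sub>0 L\<^sub>1 N
    where lim: "(m \<longlongrightarrow> L\<^sub>0) at_bot" "(m \<longlongrightarrow> L\<^sub>1) at_top" "(n \<longlongrightarrow> N) at_top"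
    and "L\<^sub>0 < L\<^sub>1"
    by (rule limits)
  define \<alpha> where "\<alpha> = 1 / (L\<^sub>1 - L\<^sub>0)"
  have "\<alpha> > 0" using \<open>L\<^sub>0 < L\<^sub>1\<close> by (simp add: \<alpha>_def)
  have "((\<lambda>i. \<alpha> * m i + - (\<alpha> * L\<^sub>0)) \<longlongrightarrow> \<alpha> * L\<^sub>0 + - (\<alpha> * L\<^sub>0)) at_bot"
    "((\<lambda>i. \<alpha> * m i + - (\<alpha> * L\<^sub>0)) \<longlongrightarrow> \<alpha> * L\<^sub>1 + - (\<alpha> * L\<^sub>0)) at_top"
    "((\<lambda>i. \<alpha> * n i + - (\<alpha> * N)) \<longlongrightarrow> \<alpha> * N + - (\<alpha> * N)) at_top"
    by (intro tendsto_intros lim)+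
  moreover have "\<alpha> * L\<^sub>1 + - (\<alpha> * L\<^sub>0) = \<alpha> * (L\<^sub>1 - L\<^sub>0)" by (simp add: algebra_simps)
  with \<open>L\<^sub>0 < L\<^sub>1\<close> have "\<alpha> * L\<^sub>1 + - (\<alpha> * L\<^sub>0) = 1" by (simp add: \<alpha>_def)
  ultimately have "standard_solution (abmn_affine \<alpha> (- (\<alpha> * L\<^sub>0)) (- (\<alpha> * N)) (a, b, m, n))"
    using positive_solution_abmn_affine[OF positive \<open>\<alpha> > 0\<close>, of "- (\<alpha> * L\<^sub>0)" "- (\<alpha> * N)"]
    unfolding standard_solution_def by simp
  with \<open>\<alpha> > 0\<close> show ?thesis by blast
qed

lemma exists_default:
  "\<exists>\<alpha> \<beta> \<gamma>. \<alpha> > 0 \<and> default_solution (abmn_affine \<alpha> \<beta> \<gamma> (a, b, m, n))"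
proof -
  obtain L\<^sub>0 N where lim: "(m \<longlongrightarrow> L\<^sub>0) at_bot" "(n \<longlongrightarrow> N) at_top"
    by (meson limits)
  have "m 0 - m (- 1) > 0" using m_step[of "- 1"] a_pos[of "- 1"] b_pos[of "- 1"] by simp
  define \<alpha> where "\<alpha> = 1 / (m 0 - m (- 1))"
  have "\<alpha> > 0" using \<open>m 0 - m (- 1) > 0\<close> by (simp add: \<alpha>_def)
  have "((\<lambda>i. \<alpha> * m i + - (\<alpha> * L\<^sub>0)) \<longlongrightarrow> \<alpha> * L\<^sub>0 + - (\<alpha> * L\<^sub>0)) at_bot"
    "((\<lambda>i. \<alpha> * n i + - (\<alpha> * N)) \<longlongrightarrow> \<alpha> * N + - (\<alpha> * N)) at_top"
    by (intro tendsto_intros lim)+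
  moreover have "\<alpha> * m 0 - \<alpha> * m (- 1) = \<alpha> * (m 0 - m (- 1))" by (simp add: algebra_simps)
  with \<open>m 0 - m (- 1) > 0\<close> have "\<alpha> * m 0 - \<alpha> * m (- 1) = 1" by (simp add: \<alpha>_def)
  ultimately have "default_solution (abmn_affine \<alpha> (- (\<alpha> * L\<^sub>0)) (- (\<alpha> * N)) (a, b, m, n))"
    using positive_solution_abmn_affine[OF positive \<open>\<alpha> > 0\<close>, of "- (\<alpha> * L\<^sub>0)" "- (\<alpha> * N)"]
    unfolding default_solution_def by simp
  with \<open>\<alpha> > 0\<close> show ?thesis by blast
qed

end

lemma standard_solution_affine_eq:
  assumes "standard_solution q" "standard_solution (abmn_affine \<alpha> \<beta> \<gamma> q)"
  shows "abmn_affine \<alpha> \<beta> \<gamma> q = q"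
proof -
  obtain a b m n where q: "q = (a, b, m, n)" by (cases q)
  have lim: "(m \<longlongrightarrow> 0) at_bot" "(n \<longlongrightarrow> 0) at_top" "(m \<longlongrightarrow> 1) at_top"
    and lim': "((\<lambda>i. \<alpha> * m i + \<beta>) \<longlongrightarrow> 0) at_bot" "((\<lambda>i. \<alpha> * n i + \<gamma>) \<longlongrightarrow> 0) at_top"
      "((\<lambda>i. \<alpha> * m i + \<beta>) \<longlongrightarrow> 1) at_top"
    using assms unfolding q standard_solution_def by simp_all
  have "\<alpha> * 0 + \<beta> = 0" "\<alpha> * 0 + \<gamma> = 0" "\<alpha> * 1 + \<beta> = 1"
    by (rule affine_limit_unique[OF _ lim(1) lim'(1)] affine_limit_unique[OF _ lim(2) lim'(2)]
        affine_limit_unique[OF _ lim(3) lim'(3)]; simp)+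
  then show ?thesis by (simp add: q abmn_affine_id)
qed

lemma default_solution_affine_eq:
  assumes "default_solution q" "default_solution (abmn_affine \<alpha> \<beta> \<gamma> q)"
  shows "abmn_affine \<alpha> \<beta> \<gamma> q = q"
proof -
  obtain a b m n where q: "q = (a, b, m, n)" by (cases q)
  have lim: "(m \<longlongrightarrow> 0) at_bot" "(n \<longlongrightarrow> 0) at_top" and "m 0 - m (- 1) = 1"
    and lim': "((\<lambda>i. \<alpha> * m i + \<beta>) \<longlongrightarrow> 0) at_bot" "((\<lambda>i. \<alpha> * n i + \<gamma>) \<longlongrightarrow> 0) at_top"
    and "(\<alpha> * m 0 + \<beta>) - (\<alpha> * m (- 1) + \<beta>) = 1"
    using assms unfolding q default_solution_def by simp_all
  have "\<alpha> * 0 + \<beta> = 0" "\<alpha> * 0 + \<gamma> = 0"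
    by (rule affine_limit_unique[OF _ lim(1) lim'(1)] affine_limit_unique[OF _ lim(2) lim'(2)]; simp)+
  moreover have "\<alpha> * (m 0 - m (- 1)) = 1"
    using \<open>(\<alpha> * m 0 + \<beta>) - (\<alpha> * m (- 1) + \<beta>) = 1\<close> by (simp add: algebra_simps)
  with \<open>m 0 - m (- 1) = 1\<close> have "\<alpha> = 1" by simp
  ultimately show ?thesis by (simp add: q abmn_affine_id)
qed

lemma ex1_normalized_representative:
  assumes "positive_solution x"
    and "\<exists>\<alpha> \<beta> \<gamma>. \<alpha> > 0 \<and> P (abmn_affine \<alpha> \<beta> \<gamma> x)"
    and rigid: "\<And>y \<alpha> \<beta> \<gamma>. P y \<Longrightarrow> P (abmn_affine \<alpha> \<beta> \<gamma> y) \<Longrightarrow> abmn_affine \<alpha> \<beta> \<gamma> y = y"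
  shows "\<exists>!y. positive_solution y \<and> abmn_sim x y \<and> P y"
proof (rule ex_ex1I)
  show "\<exists>y. positive_solution y \<and> abmn_sim x y \<and> P y"
    using assms(1,2) positive_solution_abmn_affine abmn_sim_iff_affine by blast
next
  fix y y'
  assume "positive_solution y \<and> abmn_sim x y \<and> P y" "positive_solution y' \<and> abmn_sim x y' \<and> P y'"
  then have "abmn_sim y y'" "P y" "P y'" using abmn_sim_sym abmn_sim_trans by blast+
  then show "y = y'" using rigid abmn_sim_iff_affine by metis
qed

theorem mainTheorem9:
  shows "equiv {q. positive_solution q}
           {(x, y). positive_solution x \<and> positive_solution y \<and> abmn_sim x y}
       \<and> (\<forall>x. positive_solution x \<longrightarrow>
             (\<exists>!y. positive_solution y \<and> abmn_sim x y \<and> standard_solution y)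
           \<and> (\<exists>!y. positive_solution y \<and> abmn_sim x y \<and> default_solution y))"
proof (intro conjI allI impI)
  show "equiv {q. positive_solution q}
      {(x, y). positive_solution x \<and> positive_solution y \<and> abmn_sim x y}"
    by (rule equivI)
      (auto simp: refl_on_def sym_def trans_def intro: abmn_sim_refl abmn_sim_sym abmn_sim_trans)
next
  fix x assume "positive_solution x"
  moreover obtain a b m n where x: "x = (a, b, m, n)" by (cases x)
  ultimately interpret positive_abmn a b m n by unfold_locales simp
  show "\<exists>!y. positive_solution y \<and> abmn_sim x y \<and> standard_solution y"
    using \<open>positive_solution x\<close> exists_standard standard_solution_affine_eq
    unfolding x by (rule ex1_normalized_representative)
  show "\<exists>!y. positive_solution y \<and> abmn_sim x y \<and> default_solution y"
    using \<open>positive_solution x\<close> exists_default default_solution_affine_eq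
    unfolding x by (rule ex1_normalized_representative)
qed

end
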